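(* Let $f:\mathbb{Z}^n\to\mathbb{R}\cup\{+\infty\}$ be an M-convex function with bounded $\operatorname{dom} f$, and let $x\in\operatorname{dom} f$ with $\phi(x)<0$. Consider the procedure M-IncSlope$(x)$: set $y:=x$; then for each $i\in N$ (each taken exactly once, in an arbitrary order) and, for this $i$, for each $j\in N\setminus\{i\}$ (each taken exactly once, in an arbitrary order), if $f'(y;i,j)=\phi(x)$ then replace $y$ by $y+\bar c(y;i,j)(\chi_i-\chi_j)$; finally output $x':=y$. Then, for every choice of the orders, the output satisfies $\phi(x')>\phi(x)$.
   Context: $N=\{1,\dots,n\}$; $\chi_i\in\{0,1\}^n$ is the $i$-th unit vector. For $f:\mathbb{Z}^n\to\mathbb{R}\cup\{+\infty\}$, $\operatorname{dom} f=\{x\in\mathbb{Z}^n: f(x)<+\infty\}$. $f$ is M-convex if $\operatorname{dom} f\neq\emptyset$ and for all $x,y\in\operatorname{dom} f$ and every $i$ with $x(i)>y(i)$ there is $j$ with $x(j)<y(j)$ such that $f(x)+f(y)\ge f(x-\chi_i+\chi_j)+f(y+\chi_i-\chi_j)$. For $x\in\operatorname{dom} f$ and $i,j\in N$, $f'(x;i,j)=f(x+\chi_i-\chi_j)-f(x)$ (possibly $+\infty$; $f'(x;i,i)=0$), and $\phi(x)=\min_{i,j\in N}f'(x;i,j)$. For $y\in\operatorname{dom} f$ and $i,j$ with $f'(y;i,j)$ finite, the step length is $\bar c(y;i,j)=\max\{\lambda\in\mathbb{Z}_{\ge 0}: f(y+\lambda(\chi_i-\chi_j))-f(y)=\lambda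 f'(y;i,j)\}$ (finite since $\operatorname{dom} f$ is bounded). *)

theory Defs
  imports "HOL-Library.Extended_Real" "HOL-Library.Function_Algebras"
begin

text \<open>Ground set N is the finite index type 'n (N = UNIV); points of Z^N are functions 'n => int.
Functions f : Z^N -> R \<union> {+\<infinity>} are modelled as f :: ('n => int) => ereal with f never -\<infinity>.\<close>

definition chi :: "'n \<Rightarrow> ('n \<Rightarrow> int)" where
  "chi i = (\<lambda>k. if k = i then 1 else 0)"

definition dom_f :: "(('n \<Rightarrow> int) \<Rightarrow> ereal) \<Rightarrow> ('n \<Rightarrow> int) set" where
  "dom_f f = {x. f x < \<infinity>}"

definition M_convex :: "(('n \<Rightarrow> int) \<Rightarrow> ereal) \<Rightarrow> bool" where
  "M_convex f \<longleftrightarrow> dom_f f \<noteq> {} \<and>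
     (\<forall>x\<in>dom_f f. \<forall>y\<in>dom_f f. \<forall>i. x i > y i \<longrightarrow>
        (\<exists>j. x j < y j \<and> f x + f y \<ge> f (x - chi i + chi j) + f (y + chi i - chi j)))"

definition bounded_dom :: "(('n \<Rightarrow> int) \<Rightarrow> ereal) \<Rightarrow> bool" where
  "bounded_dom f \<longleftrightarrow> (\<exists>B. \<forall>x\<in>dom_f f. \<forall>k. \<bar>x k\<bar> \<le> B)"

definition fder :: "(('n \<Rightarrow> int) \<Rightarrow> ereal) \<Rightarrow> ('n \<Rightarrow> int) \<Rightarrow> 'n \<Rightarrow> 'n \<Rightarrow> ereal" where
  "fder f x i j = f (x + chi i - chi j) - f x"

definition phi :: "(('n::finite \<Rightarrow> int) \<Rightarrow> ereal) \<Rightarrow> ('n \<Rightarrow> int) \<Rightarrow> ereal" where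
  "phi f x = Min {fder f x i j | i j. True}"

definition smul :: "int \<Rightarrow> ('n \<Rightarrow> int) \<Rightarrow> ('n \<Rightarrow> int)" where
  "smul c v = (\<lambda>k. c * v k)"

definition cbar :: "(('n \<Rightarrow> int) \<Rightarrow> ereal) \<Rightarrow> ('n \<Rightarrow> int) \<Rightarrow> 'n \<Rightarrow> 'n \<Rightarrow> nat" where
  "cbar f y i j = Max {l::nat. f (y + smul (int l) (chi i - chi j)) - f y
                                = ereal (real l) * fder f y i j}"

definition incslope_step :: "(('n::finite \<Rightarrow> int) \<Rightarrow> ereal) \<Rightarrow> ('n \<Rightarrow> int) \<Rightarrow> ('n \<Rightarrow> int) \<Rightarrow> 'n \<times> 'n \<Rightarrow> ('n \<Rightarrow> int)" where
  "incslope_step f x y p = (case p of (i, j) \<Rightarrow>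
     if fder f y i j = phi f x then y + smul (int (cbar f y i j)) (chi i - chi j) else y)"

text \<open>M-IncSlope(x) with outer order ord_i (a list enumerating N once each) and,
for each i, inner order ord_j i (a list enumerating N - {i} once each).\<close>
definition M_IncSlope :: "(('n::finite \<Rightarrow> int) \<Rightarrow> ereal) \<Rightarrow> ('n \<Rightarrow> int) \<Rightarrow> 'n list \<Rightarrow> ('n \<Rightarrow> 'n list) \<Rightarrow> ('n \<Rightarrow> int)" where
  "M_IncSlope f x ord_i ord_j =
     foldl (incslope_step f x) x (concat (map (\<lambda>i. map (\<lambda>j. (i, j)) (ord_j i)) ord_i))"

end

theory Submission
  imports Defs
begin

text \<open>Let \<open>\<alpha> = \<phi>(x) < 0\<close>. If all slopes \<open>f'(y;k,l)\<close> are at least \<alpha>, repeated use of the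
exchange axiom between \<open>z\<close> and \<open>y\<close> gives the global bound \<open>f(z) \<ge> f(y) + \<alpha> \<parallel>(z - y)\<^sup>+\<parallel>\<^sub>1\<close>,
strictly so if \<open>z(k) > y(k)\<close> for some \<open>k\<close> all of whose slopes \<open>f'(y;k,\<cdot>)\<close> exceed \<alpha>.
Consequently a step \<open>y' = y + c (\<chi>\<^sub>i - \<chi>\<^sub>j)\<close> of maximal length along a pair of slope \<alpha> keeps all
slopes \<open>\<ge> \<alpha>\<close>, makes \<open>f'(y';i,j) > \<alpha>\<close> by maximality of \<open>c\<close>, and keeps every pair that already had
slope \<open>> \<alpha>\<close> (all of row \<open>k\<close> for earlier \<open>k\<close>, earlier pairs of row \<open>i\<close>) above \<alpha>. After all pairs have
been visited every off-diagonal slope exceeds \<alpha>, and the diagonal slopes are \<open>0 > \<alpha>\<close>.\<close>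

lemma ereal_le_minus_iff_add_le: "ereal a \<le> A - ereal r \<longleftrightarrow> ereal (r + a) \<le> A"
  by (cases A) auto

lemma ereal_less_minus_iff_add_less: "ereal a < A - ereal r \<longleftrightarrow> ereal (r + a) < A"
  by (cases A) auto

lemma ereal_minus_eq_iff: "A - ereal r = ereal b \<longleftrightarrow> A = ereal (r + b)"
  by (cases A) auto

lemma ereal_add_le_less_mono: "ereal a \<le> A \<Longrightarrow> ereal b < B \<Longrightarrow> ereal (a + b) < A + B"
  by (cases A; cases B) auto

lemma ereal_add_less_le_mono: "ereal a < A \<Longrightarrow> ereal b \<le> B \<Longrightarrow> ereal (a + b) < A + B"
  by (cases A; cases B) auto

lemma notin_dom_f_iff: "z \<notin> dom_f f \<longleftrightarrow> f z = \<infinity>"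
  by (simp add: dom_f_def less_top)

lemma fder_ge_iff:
  "f y = ereal r \<Longrightarrow> ereal a \<le> fder f y k l \<longleftrightarrow> ereal (r + a) \<le> f (y + chi k - chi l)"
  by (simp add: fder_def ereal_le_minus_iff_add_le)

lemma fder_gt_iff:
  "f y = ereal r \<Longrightarrow> ereal a < fder f y k l \<longleftrightarrow> ereal (r + a) < f (y + chi k - chi l)"
  by (simp add: fder_def ereal_less_minus_iff_add_less)

lemma fder_diag: "f y = ereal r \<Longrightarrow> fder f y k k = 0"
  by (simp add: fder_def)

lemma smul_0_left [simp]: "smul 0 v = 0"
  by (simp add: smul_def zero_fun_def)

definition excess :: "('n::finite \<Rightarrow> int) \<Rightarrow> ('n \<Rightarrow> int) \<Rightarrow> nat" where
  "excess z y = (\<Sum>t\<in>UNIV. nat (z t - y t))"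

lemma excess_eq_0_iff: "excess z y = 0 \<longleftrightarrow> (\<forall>t. z t \<le> y t)"
  by (simp add: excess_def)

lemma excess_exchange:
  assumes "y i < z i" "z j < y j"
  shows "excess z y = Suc (excess (z - chi i + chi j) y)"
proof -
  have "nat (z t - y t) = nat ((z - chi i + chi j) t - y t) + (if t = i then 1 else 0)" for t
    using assms by (auto simp: chi_def)
  then show ?thesis
    by (simp add: excess_def sum.distrib)
qed

lemma excess_line:
  assumes "i \<noteq> j"
  shows "excess (y + smul (int c) (chi i - chi j)) y = c"
proof -
  have "nat ((y + smul (int c) (chi i - chi j)) t - y t) = (if t = i then c else 0)" for t
    using assms by (auto simp: chi_def smul_def)
  then show ?thesis
    by (simp add: excess_def)
qed

lemma excess_line_shift_le:
  "excess (y + smul (int c) (chi i - chi j) + chi k - chi l) y \<le> c + 1"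
proof -
  have "excess (y + smul (int c) (chi i - chi j) + chi k - chi l) y
      \<le> (\<Sum>t\<in>UNIV. (if t = i then c else 0) + (if t = k then 1 else 0))"
    unfolding excess_def by (rule sum_mono) (auto simp: smul_def chi_def)
  then show ?thesis
    by (simp add: sum.distrib)
qed

lemma excess_line_shift_le_if_not_above:
  assumes "(y + smul (int c) (chi i - chi j) + chi k - chi l) k \<le> y k"
  shows "excess (y + smul (int c) (chi i - chi j) + chi k - chi l) y \<le> c"
proof -
  have "excess (y + smul (int c) (chi i - chi j) + chi k - chi l) y
      \<le> (\<Sum>t\<in>UNIV. if t = i then c else 0)"
    unfolding excess_def using assms by (intro sum_mono) (auto simp: smul_def chi_def)
  then show ?thesis
    by simp
qed

lemma cbar_maximal:
  assumes "bounded_dom f" and y: "f y = ereal r" and a: "fder f y i j = ereal a" and "i \<noteq> j"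
  shows "f (y + smul (int (cbar f y i j)) (chi i - chi j)) = ereal (r + real (cbar f y i j) * a)"
    and "f (y + smul (int (Suc (cbar f y i j))) (chi i - chi j))
           \<noteq> ereal (r + real (Suc (cbar f y i j)) * a)"
proof -
  define S where "S = {l::nat. f (y + smul (int l) (chi i - chi j)) - f y
                                = ereal (real l) * fder f y i j}"
  have S_iff: "l \<in> S \<longleftrightarrow> f (y + smul (int l) (chi i - chi j)) = ereal (r + real l * a)" for l
    by (simp add: S_def y a ereal_minus_eq_iff)
  obtain B where B: "\<forall>w\<in>dom_f f. \<forall>k. \<bar>w k\<bar> \<le> B"
    using \<open>bounded_dom f\<close> by (auto simp: bounded_dom_def)
  have "S \<subseteq> {..nat (B - y i)}"
  proof
    fix l assume "l \<in> S"
    then have "y + smul (int l) (chi i - chi j) \<in> dom_f f"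
      by (simp add: S_iff dom_f_def)
    moreover have "(y + smul (int l) (chi i - chi j)) i = y i + int l"
      using \<open>i \<noteq> j\<close> by (simp add: smul_def chi_def)
    ultimately have "\<bar>y i + int l\<bar> \<le> B"
      using B by metis
    then show "l \<in> {..nat (B - y i)}"
      by auto
  qed
  then have "finite S"
    by (rule finite_subset) simp
  moreover have "0 \<in> S"
    by (simp add: S_iff y)
  ultimately have "Max S \<in> S"
    by (auto intro: Max_in)
  moreover have "Suc (Max S) \<notin> S"
    by (metis Max_ge[OF \<open>finite S\<close>] Suc_n_not_le_n)
  moreover have "cbar f y i j = Max S"
    by (simp add: cbar_def S_def)
  ultimately show "f (y + smul (int (cbar f y i j)) (chi i - chi j)) = ereal (r + real (cbar f y i j) * a)"
    and "f (y + smul (int (Suc (cbar f y i j))) (chi i - chi j))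
           \<noteq> ereal (r + real (Suc (cbar f y i j)) * a)"
    by (simp_all add: S_iff)
qed

lemma finite_fder_values:
  fixes f :: "('n::finite \<Rightarrow> int) \<Rightarrow> ereal"
  shows "finite {fder f y i j | i j. True}"
proof -
  have "{fder f y i j | i j. True} = (\<lambda>(i, j). fder f y i j) ` (UNIV :: ('n::finite \<times> 'n) set)"
    by auto
  then show ?thesis
    by simp
qed

lemma phi_le_fder: "phi f y \<le> fder f y i j"
  unfolding phi_def by (rule Min_le[OF finite_fder_values]) blast

lemma phi_attained:
  obtains i j where "phi f y = fder f y i j"
proof -
  have "phi f y \<in> {fder f y i j | i j. True}"
    unfolding phi_def by (rule Min_in[OF finite_fder_values]) blast
  then show ?thesis
    using that by blast
qed

lemma less_phi_iff: "a < phi f y \<longleftrightarrow> (\<forall>i j. a < fder f y i j)"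
  unfolding phi_def by (subst Min_gr_iff[OF finite_fder_values]) blast+

text \<open>The invariant of M-IncSlope\<open>(x)\<close> with \<open>\<alpha> = \<phi>(x)\<close>; \<open>P\<close> holds the pairs already visited.\<close>

definition slopes_above :: "(('n \<Rightarrow> int) \<Rightarrow> ereal) \<Rightarrow> real \<Rightarrow> ('n \<Rightarrow> int) \<Rightarrow> ('n \<times> 'n) set \<Rightarrow> bool" where
  "slopes_above f \<alpha> y P \<longleftrightarrow> y \<in> dom_f f \<and> (\<forall>k l. ereal \<alpha> \<le> fder f y k l)
     \<and> (\<forall>(k, l)\<in>P. ereal \<alpha> < fder f y k l)"

context
  fixes f :: "('n::finite \<Rightarrow> int) \<Rightarrow> ereal"
  assumes not_minf: "\<forall>z. f z \<noteq> -\<infinity>" and M_convex: "M_convex f"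
begin

lemma dom_f_obtain_ereal:
  assumes "z \<in> dom_f f"
  obtains s where "f z = ereal s"
  using assms not_minf by (cases "f z") (auto simp: dom_f_def)

lemma dom_f_le_imp_eq:
  assumes "y \<in> dom_f f" "z \<in> dom_f f" "\<forall>t. z t \<le> y t"
  shows "z = y"
proof (rule ccontr)
  assume "z \<noteq> y"
  with assms(3) obtain i where "z i < y i"
    by (metis ext order_less_le)
  with M_convex assms(1,2) obtain j where "y j < z j"
    unfolding M_convex_def by blast
  with assms(3) show False
    by (meson not_le)
qed

lemma exchange_lower_bound:
  assumes y: "f y = ereal r" and z: "z \<in> dom_f f" and "y i < z i"
  obtains j where "z j < y j" "f (z - chi i + chi j) + fder f y i j \<le> f z"
proof -
  from M_convex y z \<open>y i < z i\<close> obtain j where "z j < y j"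
    and exch: "f (z - chi i + chi j) + f (y + chi i - chi j) \<le> f z + f y"
    unfolding M_convex_def dom_f_def by fastforce
  obtain s where s: "f z = ereal s"
    using z by (rule dom_f_obtain_ereal)
  have "f (z - chi i + chi j) + fder f y i j \<le> f z"
    using exch not_minf y s unfolding fder_def
    by (cases "f (z - chi i + chi j)"; cases "f (y + chi i - chi j)") auto
  with \<open>z j < y j\<close> show ?thesis
    using that by blast
qed

lemma lower_bound_excess:
  assumes y: "f y = ereal r" and slopes: "\<forall>k l. ereal \<alpha> \<le> fder f y k l"
  shows "ereal (r + real (excess z y) * \<alpha>) \<le> f z"
proof -
  have "ereal (r + real n * \<alpha>) \<le> f z" if "excess z y = n" for n z
    using that
  proof (induction n arbitrary: z)
    case 0
    have "y \<in> dom_f f"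
      using y by (simp add: dom_f_def)
    with 0 have "z \<in> dom_f f \<Longrightarrow> z = y"
      by (simp add: dom_f_le_imp_eq excess_eq_0_iff)
    then show ?case
      using y by (cases "z \<in> dom_f f") (auto simp: notin_dom_f_iff)
  next
    case (Suc n)
    show ?case
    proof (cases "z \<in> dom_f f")
      case True
      from Suc.prems obtain i where "y i < z i"
        by (metis excess_eq_0_iff nat.discI not_le_imp_less)
      then obtain j where "z j < y j" and exch: "f (z - chi i + chi j) + fder f y i j \<le> f z"
        using exchange_lower_bound[OF y True] by blast
      have "ereal (r + real n * \<alpha>) \<le> f (z - chi i + chi j)"
        using Suc excess_exchange[OF \<open>y i < z i\<close> \<open>z j < y j\<close>] by simp
      then have "ereal (r + real n * \<alpha>) + ereal \<alpha> \<le> f (z - chi i + chi j) + fder f y i j"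
        using slopes by (intro add_mono) auto
      with exch show ?thesis
        by (simp add: algebra_simps)
    qed (simp add: notin_dom_f_iff)
  qed
  then show ?thesis
    by blast
qed

lemma lower_bound_excess_le:
  assumes "f y = ereal r" "\<forall>k l. ereal \<alpha> \<le> fder f y k l" "\<alpha> \<le> 0" "excess z y \<le> n"
  shows "ereal (r + real n * \<alpha>) \<le> f z"
proof -
  have "ereal (r + real n * \<alpha>) \<le> ereal (r + real (excess z y) * \<alpha>)"
    using assms(3,4) by (simp add: mult_right_mono_neg)
  also have "\<dots> \<le> f z"
    by (rule lower_bound_excess[OF assms(1,2)])
  finally show ?thesis .
qed

lemma lower_bound_excess_strict:
  assumes y: "f y = ereal r" and slopes: "\<forall>k l. ereal \<alpha> \<le> fder f y k l" and "\<alpha> \<le> 0"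
    and row: "\<forall>l. l \<noteq> k \<longrightarrow> ereal \<alpha> < fder f y k l"
    and "y k < z k" and "excess z y \<le> n"
  shows "ereal (r + real n * \<alpha>) < f z"
proof (cases "z \<in> dom_f f")
  case True
  obtain j where "z j < y j" and exch: "f (z - chi k + chi j) + fder f y k j \<le> f z"
    using exchange_lower_bound[OF y True \<open>y k < z k\<close>] by blast
  have excess: "excess z y = Suc (excess (z - chi k + chi j) y)"
    using excess_exchange[OF \<open>y k < z k\<close> \<open>z j < y j\<close>] .
  then obtain m where n: "n = Suc m" and "excess (z - chi k + chi j) y \<le> m"
    using \<open>excess z y \<le> n\<close> by (cases n) auto
  then have "ereal (r + real m * \<alpha>) \<le> f (z - chi k + chi j)"
    using lower_bound_excess_le[OF y slopes \<open>\<alpha> \<le> 0\<close>] by blast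
  moreover have "ereal \<alpha> < fder f y k j"
    using row \<open>y k < z k\<close> \<open>z j < y j\<close> by (metis less_asym)
  ultimately have "ereal (r + real m * \<alpha> + \<alpha>) < f (z - chi k + chi j) + fder f y k j"
    by (rule ereal_add_le_less_mono)
  with exch n show ?thesis
    by (simp add: algebra_simps)
qed (simp add: notin_dom_f_iff)

lemma lower_bound_shifted_line:
  assumes y: "f y = ereal r" and slopes: "\<forall>k l. ereal \<alpha> \<le> fder f y k l"
    and "i \<noteq> j" "l \<noteq> i" "l \<noteq> j" and il: "ereal \<alpha> < fder f y i l"
  shows "ereal (r + (real c + 1) * \<alpha>) < f (y + smul (int c) (chi i - chi j) + chi i - chi l)"
proof (induction c)
  case 0
  have "ereal (r + \<alpha>) < f (y + chi i - chi l)"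
    using il fder_gt_iff[of f y r \<alpha> i l] y by blast
  then show ?case
    by (simp add: fun_diff_def plus_fun_def)
next
  case (Suc c)
  define z where "z = y + smul (int (Suc c)) (chi i - chi j) + chi i - chi l"
  have "ereal (r + (real (Suc c) + 1) * \<alpha>) < f z"
  proof (cases "z \<in> dom_f f")
    case True
    have "y i < z i"
      using \<open>i \<noteq> j\<close> \<open>l \<noteq> i\<close> by (simp add: z_def smul_def chi_def)
    then obtain j' where "z j' < y j'" and exch: "f (z - chi i + chi j') + fder f y i j' \<le> f z"
      using exchange_lower_bound[OF y True] by blast
    then have "j' = j \<or> j' = l"
      using \<open>i \<noteq> j\<close> \<open>l \<noteq> i\<close> by (auto simp: z_def smul_def chi_def split: if_splits)
    then have "ereal (r + real (Suc c) * \<alpha> + \<alpha>) < f (z - chi i + chi j') + fder f y i j'"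
    proof
      assume "j' = j"
      then have "z - chi i + chi j' = y + smul (int c) (chi i - chi j) + chi i - chi l"
        by (auto simp: z_def smul_def algebra_simps)
      then have "ereal (r + (real c + 1) * \<alpha>) < f (z - chi i + chi j')"
        using Suc.IH by (simp only:)
      moreover have "ereal \<alpha> \<le> fder f y i j'"
        using slopes by blast
      ultimately have "ereal (r + (real c + 1) * \<alpha> + \<alpha>) < f (z - chi i + chi j') + fder f y i j'"
        by (rule ereal_add_less_le_mono)
      then show ?thesis
        by (simp add: algebra_simps)
    next
      assume "j' = l"
      then have "z - chi i + chi j' = y + smul (int (Suc c)) (chi i - chi j)"
        by (auto simp: z_def)
      then have "ereal (r + real (Suc c) * \<alpha>) \<le> f (z - chi i + chi j')"
        using lower_bound_excess[OF y slopes] excess_line[OF \<open>i \<noteq> j\<close>] by metis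
      with il \<open>j' = l\<close> show ?thesis
        by (intro ereal_add_le_less_mono) auto
    qed
    with exch show ?thesis
      by (simp add: algebra_simps)
  qed (simp add: notin_dom_f_iff)
  then show ?case
    unfolding z_def .
qed

lemma slopes_ge_after_line:
  assumes y: "f y = ereal r" and slopes: "\<forall>k l. ereal \<alpha> \<le> fder f y k l" and "\<alpha> \<le> 0"
    and y': "f (y + smul (int c) (chi i - chi j)) = ereal (r + real c * \<alpha>)"
  shows "ereal \<alpha> \<le> fder f (y + smul (int c) (chi i - chi j)) k l"
proof -
  have "ereal (r + real (c + 1) * \<alpha>) \<le> f (y + smul (int c) (chi i - chi j) + chi k - chi l)"
    by (rule lower_bound_excess_le[OF y slopes \<open>\<alpha> \<le> 0\<close> excess_line_shift_le])
  then show ?thesis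
    using y' by (simp add: fder_ge_iff algebra_simps)
qed

lemma strict_row_after_line:
  assumes y: "f y = ereal r" and slopes: "\<forall>k l. ereal \<alpha> \<le> fder f y k l" and "\<alpha> < 0"
    and y': "f (y + smul (int c) (chi i - chi j)) = ereal (r + real c * \<alpha>)"
    and row: "\<forall>l. l \<noteq> k \<longrightarrow> ereal \<alpha> < fder f y k l"
  shows "ereal \<alpha> < fder f (y + smul (int c) (chi i - chi j)) k l"
proof (cases "y k < (y + smul (int c) (chi i - chi j) + chi k - chi l) k")
  case True
  have "ereal (r + real (c + 1) * \<alpha>) < f (y + smul (int c) (chi i - chi j) + chi k - chi l)"
    using \<open>\<alpha> < 0\<close> by (intro lower_bound_excess_strict[OF y slopes _ row True excess_line_shift_le]) simp
  then show ?thesis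
    using y' by (simp add: fder_gt_iff algebra_simps)
next
  case False
  have "ereal (r + real c * \<alpha>) \<le> f (y + smul (int c) (chi i - chi j) + chi k - chi l)"
    using \<open>\<alpha> < 0\<close> False
    by (intro lower_bound_excess_le[OF y slopes] excess_line_shift_le_if_not_above) simp_all
  then have "ereal 0 \<le> fder f (y + smul (int c) (chi i - chi j)) k l"
    using y' by (simp add: fder_ge_iff)
  moreover have "ereal \<alpha> < ereal 0"
    using \<open>\<alpha> < 0\<close> by simp
  ultimately show ?thesis
    by (meson order_less_le_trans)
qed

lemma strict_after_line_off_direction:
  assumes y: "f y = ereal r" and slopes: "\<forall>k l. ereal \<alpha> \<le> fder f y k l"
    and y': "f (y + smul (int c) (chi i - chi j)) = ereal (r + real c * \<alpha>)"
    and "i \<noteq> j" "l \<noteq> i" "l \<noteq> j" and "ereal \<alpha> < fder f y i l"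
  shows "ereal \<alpha> < fder f (y + smul (int c) (chi i - chi j)) i l"
  using lower_bound_shifted_line[OF y slopes assms(4-7)] y' by (simp add: fder_gt_iff algebra_simps)

lemma strict_after_maximal_line:
  assumes y: "f y = ereal r" and slopes: "\<forall>k l. ereal \<alpha> \<le> fder f y k l" and "\<alpha> \<le> 0"
    and y': "f (y + smul (int c) (chi i - chi j)) = ereal (r + real c * \<alpha>)"
    and maximal: "f (y + smul (int (Suc c)) (chi i - chi j)) \<noteq> ereal (r + real (Suc c) * \<alpha>)"
  shows "ereal \<alpha> < fder f (y + smul (int c) (chi i - chi j)) i j"
proof -
  have "y + smul (int c) (chi i - chi j) + chi i - chi j = y + smul (int (Suc c)) (chi i - chi j)"
    by (rule ext) (simp add: smul_def algebra_simps)
  then have "fder f (y + smul (int c) (chi i - chi j)) i j \<noteq> ereal \<alpha>"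
    using maximal y' by (simp add: fder_def ereal_minus_eq_iff algebra_simps)
  with slopes_ge_after_line[OF y slopes \<open>\<alpha> \<le> 0\<close> y'] show ?thesis
    by (simp add: order_le_neq_trans)
qed

lemma slopes_above_maximal_line:
  assumes "\<alpha> < 0" and inv: "slopes_above f \<alpha> y (Sigma D (\<lambda>k. - {k}) \<union> {i} \<times> J)"
    and "i \<noteq> j" and steepest: "fder f y i j = ereal \<alpha>"
    and line: "f (y + smul (int c) (chi i - chi j)) = f y + ereal (real c * \<alpha>)"
    and maximal: "f (y + smul (int (Suc c)) (chi i - chi j)) \<noteq> f y + ereal (real (Suc c) * \<alpha>)"
  shows "slopes_above f \<alpha> (y + smul (int c) (chi i - chi j)) (Sigma D (\<lambda>k. - {k}) \<union> {i} \<times> insert j J)"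
proof -
  from inv have "y \<in> dom_f f" and slopes: "\<forall>k l. ereal \<alpha> \<le> fder f y k l"
    and strict: "\<forall>(k, l)\<in>Sigma D (\<lambda>k. - {k}) \<union> {i} \<times> J. ereal \<alpha> < fder f y k l"
    by (auto simp: slopes_above_def)
  obtain r where y: "f y = ereal r"
    using \<open>y \<in> dom_f f\<close> by (rule dom_f_obtain_ereal)
  define y' where "y' = y + smul (int c) (chi i - chi j)"
  have y': "f (y + smul (int c) (chi i - chi j)) = ereal (r + real c * \<alpha>)"
    using line y by simp
  have "ereal \<alpha> < fder f y' k l" if kl: "(k, l) \<in> Sigma D (\<lambda>k. - {k}) \<union> {i} \<times> insert j J" for k l
  proof -
    consider "k \<in> D" | "k = i" "l = j" | "k = i" "l \<in> J" "l = i" | "k = i" "l \<in> J" "l \<noteq> i"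
      using kl by auto
    then show ?thesis
    proof cases
      case 1
      with strict have "\<forall>l. l \<noteq> k \<longrightarrow> ereal \<alpha> < fder f y k l"
        by auto
      then show ?thesis
        unfolding y'_def using strict_row_after_line[OF y slopes \<open>\<alpha> < 0\<close> y'] by blast
    next
      case 2
      have "f (y + smul (int (Suc c)) (chi i - chi j)) \<noteq> ereal (r + real (Suc c) * \<alpha>)"
        using maximal y by simp
      with 2 \<open>\<alpha> < 0\<close> show ?thesis
        unfolding y'_def by (simp add: strict_after_maximal_line[OF y slopes _ y'])
    next
      case 3
      with \<open>\<alpha> < 0\<close> y' show ?thesis
        by (simp add: y'_def fder_diag)
    next
      case 4
      with strict have "ereal \<alpha> < fder f y i l"
        by auto
      with steepest have "l \<noteq> j"
        by auto
      with 4 \<open>i \<noteq> j\<close> \<open>ereal \<alpha> < fder f y i l\<close> show ?thesis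
        unfolding y'_def by (simp add: strict_after_line_off_direction[OF y slopes y'])
    qed
  qed
  moreover have "y' \<in> dom_f f"
    using y' by (simp add: y'_def dom_f_def)
  moreover have "\<forall>k l. ereal \<alpha> \<le> fder f y' k l"
    unfolding y'_def using \<open>\<alpha> < 0\<close> slopes_ge_after_line[OF y slopes _ y'] by simp
  ultimately show ?thesis
    unfolding y'_def slopes_above_def by blast
qed

lemma slopes_above_incslope_step:
  assumes "bounded_dom f" and phi: "phi f x = ereal \<alpha>" and "\<alpha> < 0"
    and inv: "slopes_above f \<alpha> y (Sigma D (\<lambda>k. - {k}) \<union> {i} \<times> J)"
  shows "slopes_above f \<alpha> (incslope_step f x y (i, j)) (Sigma D (\<lambda>k. - {k}) \<union> {i} \<times> insert j J)"
proof (cases "fder f y i j = ereal \<alpha>")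
  case False
  with inv have "ereal \<alpha> < fder f y i j"
    by (auto simp: slopes_above_def order_le_neq_trans)
  with inv False phi show ?thesis
    by (auto simp: slopes_above_def incslope_step_def)
next
  case True
  obtain r where y: "f y = ereal r"
    using inv dom_f_obtain_ereal by (auto simp: slopes_above_def)
  have "i \<noteq> j"
    using True \<open>\<alpha> < 0\<close> fder_diag[of f y r] y by auto
  have "slopes_above f \<alpha> (y + smul (int (cbar f y i j)) (chi i - chi j))
      (Sigma D (\<lambda>k. - {k}) \<union> {i} \<times> insert j J)"
    using cbar_maximal[OF \<open>bounded_dom f\<close> y True \<open>i \<noteq> j\<close>] y
    by (intro slopes_above_maximal_line[OF \<open>\<alpha> < 0\<close> inv \<open>i \<noteq> j\<close> True]) simp_all
  with True phi show ?thesis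
    by (simp add: incslope_step_def)
qed

lemma slopes_above_fold_row:
  assumes "bounded_dom f" "phi f x = ereal \<alpha>" "\<alpha> < 0"
  shows "slopes_above f \<alpha> y (Sigma D (\<lambda>k. - {k}) \<union> {i} \<times> J) \<Longrightarrow>
    slopes_above f \<alpha> (foldl (incslope_step f x) y (map (\<lambda>j. (i, j)) js))
      (Sigma D (\<lambda>k. - {k}) \<union> {i} \<times> (J \<union> set js))"
proof (induction js arbitrary: y J)
  case (Cons j js)
  have "slopes_above f \<alpha> (incslope_step f x y (i, j)) (Sigma D (\<lambda>k. - {k}) \<union> {i} \<times> insert j J)"
    using slopes_above_incslope_step[OF assms Cons.prems] .
  from Cons.IH[OF this] show ?case
    by simp
qed simp

lemma slopes_above_fold_rows:
  assumes "bounded_dom f" "phi f x = ereal \<alpha>" "\<alpha> < 0"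
    and rows: "\<forall>i. set (ord_j i) = UNIV - {i}"
  shows "slopes_above f \<alpha> y (Sigma D (\<lambda>k. - {k})) \<Longrightarrow>
    slopes_above f \<alpha> (foldl (incslope_step f x) y (concat (map (\<lambda>i. map (\<lambda>j. (i, j)) (ord_j i)) is)))
      (Sigma (D \<union> set is) (\<lambda>k. - {k}))"
proof (induction "is" arbitrary: y D)
  case (Cons i "is")
  have "slopes_above f \<alpha> y (Sigma D (\<lambda>k. - {k}) \<union> {i} \<times> {})"
    using Cons.prems by simp
  then have "slopes_above f \<alpha> (foldl (incslope_step f x) y (map (\<lambda>j. (i, j)) (ord_j i)))
      (Sigma D (\<lambda>k. - {k}) \<union> {i} \<times> ({} \<union> set (ord_j i)))"
    by (rule slopes_above_fold_row[OF assms(1-3)])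
  moreover have "Sigma D (\<lambda>k. - {k}) \<union> {i} \<times> ({} \<union> set (ord_j i)) = Sigma (insert i D) (\<lambda>k. - {k})"
    using rows by auto
  ultimately show ?case
    using Cons.IH[of _ "insert i D"] by simp
qed simp

lemma phi_neq_minf:
  assumes "x \<in> dom_f f"
  shows "phi f x \<noteq> -\<infinity>"
proof -
  obtain i j where "phi f x = fder f x i j"
    by (rule phi_attained)
  moreover obtain r where "f x = ereal r"
    using assms by (rule dom_f_obtain_ereal)
  moreover have "f (x + chi i - chi j) \<noteq> -\<infinity>"
    using not_minf by blast
  ultimately show ?thesis
    by (cases "f (x + chi i - chi j)") (auto simp: fder_def)
qed

lemma less_phi_if_slopes_above_all:
  assumes "\<alpha> < 0" and "slopes_above f \<alpha> y (Sigma UNIV (\<lambda>k. - {k}))"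
  shows "ereal \<alpha> < phi f y"
proof -
  obtain r where y: "f y = ereal r"
    using assms(2) dom_f_obtain_ereal by (auto simp: slopes_above_def)
  have "ereal \<alpha> < fder f y k l" for k l
    using assms fder_diag[of f y r] y by (cases "k = l") (auto simp: slopes_above_def)
  then show ?thesis
    by (simp add: less_phi_iff)
qed

end

theorem mainTheorem4:
  fixes f :: "('n::finite \<Rightarrow> int) \<Rightarrow> ereal"
    and x :: "'n \<Rightarrow> int"
    and ord_i :: "'n list" and ord_j :: "'n \<Rightarrow> 'n list"
  assumes "\<forall>z. f z \<noteq> -\<infinity>"
    and "M_convex f"
    and "bounded_dom f"
    and "x \<in> dom_f f"
    and "phi f x < 0"
    and "distinct ord_i" and "set ord_i = UNIV"
    and "\<forall>i. distinct (ord_j i) \<and> set (ord_j i) = UNIV - {i}"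
  shows "phi f (M_IncSlope f x ord_i ord_j) > phi f x"
proof -
  from phi_neq_minf[OF assms(1,2,4)] \<open>phi f x < 0\<close> obtain \<alpha> where phi: "phi f x = ereal \<alpha>" and "\<alpha> < 0"
    by (cases "phi f x") auto
  have "slopes_above f \<alpha> x (Sigma {} (\<lambda>k. - {k}))"
    using assms(4) phi_le_fder[of f x] by (simp add: slopes_above_def phi)
  moreover have "\<forall>i. set (ord_j i) = UNIV - {i}"
    using assms(8) by blast
  ultimately have "slopes_above f \<alpha> (M_IncSlope f x ord_i ord_j) (Sigma ({} \<union> set ord_i) (\<lambda>k. - {k}))"
    unfolding M_IncSlope_def by (rule slopes_above_fold_rows[OF assms(1-3) phi \<open>\<alpha> < 0\<close>, rotated])
  then have "slopes_above f \<alpha> (M_IncSlope f x ord_i ord_j) (Sigma UNIV (\<lambda>k. - {k}))"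
    using assms(7) by simp
  with assms(1,2) \<open>\<alpha> < 0\<close> phi show ?thesis
    using less_phi_if_slopes_above_all by simp
qed

end
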